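(* Let $\mathcal{B}=(T,\bowtie)$ be a block and $\mathcal S$ a valid schedule of $\mathcal{B}$. For $v\in T$ let $c(v)$ be the number of vertices of a longest directed path in $(T,\mathcal S)$ ending at $v$, let $k=\max_{v\in T}c(v)$, and let $T_i=\{v\in T: c(v)=i\}$ for $i=1,\dots,k$. Then $c$ is a proper vertex coloring of the conflict graph $(T,\bowtie)$, and $(T_1,\dots,T_k)$ is a legal partition of $T$ consisting of $k$ nonempty sets.
   Context: A block consists of a finite set $T$ of transactions with a symmetric irreflexive conflict relation $\bowtie$; its conflict graph is the undirected graph $(T,\bowtie)$. A schedule is a set $\mathcal S\subseteq T\times T$ such that the directed graph $(T,\mathcal S)$ is acyclic; it is valid if for every pair $tx\bowtie tx'$ the graph $(T,\mathcal S)$ contains a directed path from $tx$ to $tx'$ or from $tx'$ to $tx$. A set is conflict-free if no two of its elements conflict; a legal partition of $T$ is an ordered sequence of pairwise disjoint conflict-free sets whose union is $T$. *)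

theory Defs
  imports Main
begin

definition block :: "'a set \<Rightarrow> ('a \<Rightarrow> 'a \<Rightarrow> bool) \<Rightarrow> bool" where
  "block T conf \<longleftrightarrow> finite T \<and> (\<forall>x y. conf x y \<longrightarrow> conf y x) \<and> (\<forall>x. \<not> conf x x)
     \<and> (\<forall>x y. conf x y \<longrightarrow> x \<in> T \<and> y \<in> T)"

definition schedule :: "'a set \<Rightarrow> ('a \<times> 'a) set \<Rightarrow> bool" where
  "schedule T S \<longleftrightarrow> S \<subseteq> T \<times> T \<and> acyclic S"

definition valid_schedule :: "'a set \<Rightarrow> ('a \<Rightarrow> 'a \<Rightarrow> bool) \<Rightarrow> ('a \<times> 'a) set \<Rightarrow> bool" where
  "valid_schedule T conf S \<longleftrightarrow> schedule T S \<and>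
     (\<forall>x y. conf x y \<longrightarrow> (x, y) \<in> S\<^sup>+ \<or> (y, x) \<in> S\<^sup>+)"

definition dpath :: "'a set \<Rightarrow> ('a \<times> 'a) set \<Rightarrow> 'a list \<Rightarrow> bool" where
  "dpath T S p \<longleftrightarrow> p \<noteq> [] \<and> distinct p \<and> set p \<subseteq> T \<and>
     (\<forall>i. Suc i < length p \<longrightarrow> (p ! i, p ! Suc i) \<in> S)"

definition longest_path_count :: "'a set \<Rightarrow> ('a \<times> 'a) set \<Rightarrow> 'a \<Rightarrow> nat" where
  "longest_path_count T S v = Max {length p | p. dpath T S p \<and> last p = v}"

definition conflict_free :: "('a \<Rightarrow> 'a \<Rightarrow> bool) \<Rightarrow> 'a set \<Rightarrow> bool" where
  "conflict_free conf A \<longleftrightarrow> (\<forall>x\<in>A. \<forall>y\<in>A. \<not> conf x y)"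

definition legal_partition :: "'a set \<Rightarrow> ('a \<Rightarrow> 'a \<Rightarrow> bool) \<Rightarrow> 'a set list \<Rightarrow> bool" where
  "legal_partition T conf Ps \<longleftrightarrow>
     (\<forall>i j. i < length Ps \<longrightarrow> j < length Ps \<longrightarrow> i \<noteq> j \<longrightarrow> Ps ! i \<inter> Ps ! j = {}) \<and>
     (\<forall>A\<in>set Ps. conflict_free conf A) \<and> \<Union>(set Ps) = T"

definition proper_coloring :: "'a set \<Rightarrow> ('a \<Rightarrow> 'a \<Rightarrow> bool) \<Rightarrow> ('a \<Rightarrow> 'b) \<Rightarrow> bool" where
  "proper_coloring T conf c \<longleftrightarrow> (\<forall>x\<in>T. \<forall>y\<in>T. conf x y \<longrightarrow> c x \<noteq> c y)"

end

theory Submission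
  imports Defs
begin

text \<open>Appending an edge to a longest path ending at u gives a path ending at v, because
  acyclicity keeps the new vertex off the old path; hence the longest-path count c strictly
  increases along every edge of the schedule, and therefore along every directed path. In a valid
  schedule any two conflicting transactions are joined by a directed path, so they receive
  different values of c. Conversely, dropping the last vertex of a longest path ending at v
  shows that c takes the value c v - 1, so c attains every value between 1 and its maximum.\<close>

lemma dpath_singleton: "v \<in> T \<Longrightarrow> dpath T S [v]"
  by (simp add: dpath_def)

lemma finite_dpath_lengths:
  assumes "finite T"
  shows "finite {length p | p. dpath T S p \<and> last p = v}"
proof -
  have "length p \<le> card T" if "dpath T S p" for p
  proof -
    have "length p = card (set p)" and "set p \<subseteq> T"
      using that by (simp_all add: dpath_def distinct_card)
    then show ?thesis
      using assms card_mono by metis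
  qed
  then have "{length p | p. dpath T S p \<and> last p = v} \<subseteq> {..card T}"
    by auto
  then show ?thesis
    using finite_subset by blast
qed

lemma dpath_length_le_longest_path_count:
  assumes "finite T" "dpath T S p" "last p = v"
  shows "length p \<le> longest_path_count T S v"
  unfolding longest_path_count_def
  using assms finite_dpath_lengths[OF assms(1)] by (intro Max_ge) auto

lemma longest_path_count_attained:
  assumes "finite T" "v \<in> T"
  obtains p where "dpath T S p" "last p = v" "length p = longest_path_count T S v"
proof -
  have "{length p | p. dpath T S p \<and> last p = v} \<noteq> {}"
    using dpath_singleton[OF assms(2)] by force
  then have "longest_path_count T S v \<in> {length p | p. dpath T S p \<and> last p = v}"
    unfolding longest_path_count_def using Max_in finite_dpath_lengths[OF assms(1)] by blast
  then show thesis using that by auto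
qed

lemma longest_path_count_pos:
  assumes "finite T" "v \<in> T"
  shows "1 \<le> longest_path_count T S v"
  using dpath_length_le_longest_path_count[OF assms(1) dpath_singleton[OF assms(2)]] by simp

lemma dpath_nth_rtrancl:
  assumes "dpath T S p" "i \<le> j" "j < length p"
  shows "(p ! i, p ! j) \<in> S\<^sup>*"
  using assms(2,3)
proof (induction j rule: dec_induct)
  case (step j)
  then have "(p ! j, p ! Suc j) \<in> S"
    using assms(1) by (simp add: dpath_def)
  with step show ?case by simp
qed simp

lemma dpath_in_set_rtrancl_last:
  assumes "dpath T S p" "x \<in> set p"
  shows "(x, last p) \<in> S\<^sup>*"
proof -
  obtain i where "i < length p" "p ! i = x"
    using assms(2) by (auto simp: in_set_conv_nth)
  moreover have "p \<noteq> []"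
    using assms(1) by (simp add: dpath_def)
  ultimately show ?thesis
    using dpath_nth_rtrancl[OF assms(1), of i "length p - 1"] by (simp add: last_conv_nth)
qed

lemma dpath_snoc:
  assumes "acyclic S" "dpath T S p" "(last p, v) \<in> S" "v \<in> T"
  shows "dpath T S (p @ [v])"
proof -
  have "v \<notin> set p"
  proof
    assume "v \<in> set p"
    then have "(v, last p) \<in> S\<^sup>*"
      using dpath_in_set_rtrancl_last[OF assms(2)] by blast
    with assms(3) have "(v, v) \<in> S\<^sup>+" by simp
    with assms(1) show False by (simp add: acyclic_def)
  qed
  moreover have "((p @ [v]) ! i, (p @ [v]) ! Suc i) \<in> S" if "Suc i < length (p @ [v])" for i
  proof (cases "Suc i < length p")
    case True
    then show ?thesis
      using assms(2) by (simp add: dpath_def nth_append)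
  next
    case False
    with that have "i = length p - 1" "p \<noteq> []"
      by auto
    then show ?thesis
      using assms(3) by (simp add: nth_append last_conv_nth)
  qed
  ultimately show ?thesis
    using assms(2,4) by (auto simp: dpath_def)
qed

lemma dpath_snocD:
  assumes "dpath T S (p @ [v])" "p \<noteq> []"
  shows "dpath T S p" "(last p, v) \<in> S"
proof -
  have edge: "((p @ [v]) ! i, (p @ [v]) ! Suc i) \<in> S" if "Suc i < Suc (length p)" for i
    using assms(1) that by (simp add: dpath_def)
  have "(p ! i, p ! Suc i) \<in> S" if "Suc i < length p" for i
    using edge[of i] that by (simp add: nth_append)
  then show "dpath T S p"
    using assms by (auto simp: dpath_def)
  show "(last p, v) \<in> S"
    using edge[of "length p - 1"] assms(2) by (simp add: nth_append last_conv_nth)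
qed

lemma longest_path_count_less:
  assumes "finite T" "schedule T S" "(u, v) \<in> S"
  shows "longest_path_count T S u < longest_path_count T S v"
proof -
  have "u \<in> T" "v \<in> T"
    using assms(2,3) by (auto simp: schedule_def)
  then obtain p where p: "dpath T S p" "last p = u" "length p = longest_path_count T S u"
    using longest_path_count_attained[OF assms(1)] by metis
  have "dpath T S (p @ [v])"
    using dpath_snoc assms(2,3) p \<open>v \<in> T\<close> by (auto simp: schedule_def)
  then have "length (p @ [v]) \<le> longest_path_count T S v"
    using dpath_length_le_longest_path_count[OF assms(1) _ last_snoc] by simp
  with p show ?thesis by simp
qed

lemma longest_path_count_less_trancl:
  assumes "finite T" "schedule T S" "(u, v) \<in> S\<^sup>+"
  shows "longest_path_count T S u < longest_path_count T S v"
  using assms(3)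
  by (induction rule: trancl_induct)
    (use longest_path_count_less[OF assms(1,2)] less_trans in blast)+

lemma longest_path_count_pred:
  assumes "finite T" "schedule T S" "v \<in> T" "2 \<le> longest_path_count T S v"
  obtains u where "u \<in> T" "longest_path_count T S u = longest_path_count T S v - 1"
proof -
  obtain p where p: "dpath T S p" "last p = v" "length p = longest_path_count T S v"
    using longest_path_count_attained[OF assms(1,3)] by metis
  have "butlast p \<noteq> []"
    using assms(4) p(3) by (auto simp flip: length_greater_0_conv)
  moreover have "p = butlast p @ [v]"
    using p(1,2) append_butlast_last_id by (metis dpath_def)
  ultimately have q: "dpath T S (butlast p)" and edge: "(last (butlast p), v) \<in> S"
    using dpath_snocD p(1) by metis+
  define u where "u = last (butlast p)"
  have "u \<in> T"
    using edge assms(2) by (auto simp: schedule_def u_def)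
  moreover have "longest_path_count T S v - 1 \<le> longest_path_count T S u"
    using dpath_length_le_longest_path_count[OF assms(1) q] p(3) by (simp add: u_def)
  moreover have "longest_path_count T S u < longest_path_count T S v"
    using longest_path_count_less[OF assms(1,2) edge] by (simp add: u_def)
  ultimately show thesis
    using that by simp
qed

lemma longest_path_count_intermediate:
  assumes "finite T" "schedule T S" "v \<in> T" "1 \<le> j" "j \<le> longest_path_count T S v"
  shows "\<exists>u\<in>T. longest_path_count T S u = j"
  using assms(3,5)
proof (induction "longest_path_count T S v" arbitrary: v rule: less_induct)
  case less
  show ?case
  proof (cases "j = longest_path_count T S v")
    case False
    with less.prems assms(4) have "2 \<le> longest_path_count T S v"
      by linarith
    then obtain u where "u \<in> T" "longest_path_count T S u = longest_path_count T S v - 1"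
      using longest_path_count_pred[OF assms(1,2) less.prems(1)] by metis
    with less.hyps[of u] less.prems(2) False show ?thesis
      by simp
  qed (use less.prems in blast)
qed

lemma proper_coloring_longest_path_count:
  assumes "finite T" "valid_schedule T conf S"
  shows "proper_coloring T conf (longest_path_count T S)"
  using assms longest_path_count_less_trancl
  unfolding proper_coloring_def valid_schedule_def by (metis less_irrefl)

lemma color_classes_legal_partition:
  assumes "proper_coloring T conf c" "distinct cs" "c ` T \<subseteq> set cs"
  shows "legal_partition T conf (map (\<lambda>i. {v \<in> T. c v = i}) cs)"
    (is "legal_partition T conf ?Ps")
  unfolding legal_partition_def
proof (intro conjI)
  show "\<forall>i j. i < length ?Ps \<longrightarrow> j < length ?Ps \<longrightarrow> i \<noteq> j \<longrightarrow> ?Ps ! i \<inter> ?Ps ! j = {}"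
    using assms(2) by (auto simp: nth_eq_iff_index_eq)
  show "\<forall>A\<in>set ?Ps. conflict_free conf A"
    using assms(1) by (fastforce simp: conflict_free_def proper_coloring_def)
  show "\<Union>(set ?Ps) = T"
    using assms(3) by auto
qed

theorem lemma3:
  fixes T :: "'a set" and conf :: "'a \<Rightarrow> 'a \<Rightarrow> bool" and S :: "('a \<times> 'a) set"
  assumes "block T conf" and "valid_schedule T conf S" and "T \<noteq> {}"
  defines "c \<equiv> longest_path_count T S"
  defines "k \<equiv> Max (c ` T)"
  defines "Ts \<equiv> map (\<lambda>i. {v \<in> T. c v = i}) [1..<k+1]"
  shows "proper_coloring T conf c \<and> legal_partition T conf Ts \<and> length Ts = k
         \<and> (\<forall>A\<in>set Ts. A \<noteq> {})"
proof -
  have fin: "finite T" and sched: "schedule T S"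
    using assms(1,2) by (simp_all add: block_def valid_schedule_def)
  have proper: "proper_coloring T conf c"
    unfolding c_def using proper_coloring_longest_path_count[OF fin assms(2)] .
  have "1 \<le> c v \<and> c v \<le> k" if "v \<in> T" for v
    using longest_path_count_pos[OF fin that] fin that by (simp add: c_def k_def)
  then have "c ` T \<subseteq> set [1..<k+1]"
    by fastforce
  then have "legal_partition T conf Ts"
    unfolding Ts_def using color_classes_legal_partition[OF proper] by simp
  moreover have "k \<in> c ` T"
    unfolding k_def using fin assms(3) by (intro Max_in) auto
  then obtain w where "w \<in> T" "c w = k"
    by blast
  then have "\<forall>A\<in>set Ts. A \<noteq> {}"
    using longest_path_count_intermediate[OF fin sched] by (force simp: Ts_def c_def)
  ultimately show ?thesis
    using proper by (simp add: Ts_def)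
qed

end
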